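(* Let $\mathsf{A}$ be a function from the pairs $i<j$ of $\{0,\dots,n\}$ into the nonnegative integers satisfying condition (!), and suppose $\mathsf{A}$ is indecomposable. Then $\mathsf{A}(i,n)>0$ for every $i<n$.
   Context: For integers $p,q,r$ write $r=p\,!\,q$ if $r\ge\min(p-1,q)$, with equality holding unless $p=q$. A function $\mathsf{A}$ on pairs $a<b$ of a finite linear order into the nonnegative integers satisfies (!) if $\mathsf{A}(a,b)=\mathsf{A}(b,c)\,!\,\mathsf{A}(a,c)$ whenever $a<b<c$. For such functions $\mathsf{B},\mathsf{C}$ with bases $B,C$, $\mathsf{B}+\mathsf{C}$ has base $B$ followed by $C$, agrees with $\mathsf{B}$ on $B$ and $\mathsf{C}$ on $C$, and takes value $0$ on pairs $(b,c)$ with $b\in B$, $c\in C$; functions are identified when an order-preserving bijection of the bases carries one to the other. $\mathsf{A}$ is indecomposable if there are no $\mathsf{B},\mathsf{C}$ with nonempty bases such that $\mathsf{A}=\mathsf{B}+\mathsf{C}$. *)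

theory Defs
  imports Main
begin

text \<open>Functions on pairs a<b of the finite linear order {0..n}; values outside are irrelevant.\<close>

definition bang :: "int \<Rightarrow> int \<Rightarrow> int \<Rightarrow> bool" where
  "bang p q r \<longleftrightarrow> r \<ge> min (p - 1) q \<and> (p \<noteq> q \<longrightarrow> r = min (p - 1) q)"

definition satisfies_bang :: "nat \<Rightarrow> (nat \<Rightarrow> nat \<Rightarrow> nat) \<Rightarrow> bool" where
  "satisfies_bang n A \<longleftrightarrow>
     (\<forall>a b c. a < b \<and> b < c \<and> c \<le> n \<longrightarrow>
        bang (int (A b c)) (int (A a c)) (int (A a b)))"

text \<open>Sum of B (base {0..m}) and C (base {0..l}); the result has base {0..m+l+1}.\<close>
definition fsum :: "nat \<Rightarrow> (nat \<Rightarrow> nat \<Rightarrow> nat) \<Rightarrow> nat \<Rightarrow> (nat \<Rightarrow> nat \<Rightarrow> nat) \<Rightarrow> nat \<Rightarrow> nat \<Rightarrow> nat" where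
  "fsum m B l C i j =
     (if j \<le> m then B i j
      else if m < i then C (i - Suc m) (j - Suc m)
      else 0)"

definition indecomposable :: "nat \<Rightarrow> (nat \<Rightarrow> nat \<Rightarrow> nat) \<Rightarrow> bool" where
  "indecomposable n A \<longleftrightarrow>
     \<not> (\<exists>m l B C. m + l + 1 = n \<and> satisfies_bang m B \<and> satisfies_bang l C \<and>
          (\<forall>i j. i < j \<and> j \<le> n \<longrightarrow> A i j = fsum m B l C i j))"

end

theory Submission
  imports Defs
begin

text \<open>Let m be the largest index below n with A(m,n) = 0. Condition (!) on the triple
  a < m < n forces A(a,n) = 0 for all a \<le> m, and on a triple a < c < n with c > m,
  where A(c,n) > 0 = A(a,n), it forces A(a,c) = 0. So A vanishes on all pairs straddling m,
  i.e. A splits as its restriction to {0..m} plus its restriction to {m+1..n}.\<close>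

lemma bang_zero_first:
  assumes "bang 0 q r" "0 \<le> r"
  shows "q = 0"
  using assms unfolding bang_def by (cases "q = 0") auto

lemma bang_zero_second:
  assumes "bang p 0 r" "0 < p"
  shows "r = 0"
  using assms unfolding bang_def by auto

lemma satisfies_bangD:
  assumes "satisfies_bang n A" "a < b" "b < c" "c \<le> n"
  shows "bang (int (A b c)) (int (A a c)) (int (A a b))"
  using assms unfolding satisfies_bang_def by blast

lemma satisfies_bang_zero_left:
  assumes "satisfies_bang n A" "a < b" "b < c" "c \<le> n" "A b c = 0"
  shows "A a c = 0"
  using bang_zero_first[of "int (A a c)" "int (A a b)"] satisfies_bangD[OF assms(1-4)] assms(5)
  by simp

lemma satisfies_bang_zero_inner:
  assumes "satisfies_bang n A" "a < b" "b < c" "c \<le> n" "A a c = 0" "0 < A b c"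
  shows "A a b = 0"
  using bang_zero_second[of "int (A b c)" "int (A a b)"] satisfies_bangD[OF assms(1-4)] assms(5,6)
  by simp

lemma satisfies_bang_mono:
  assumes "satisfies_bang n A" "m \<le> n"
  shows "satisfies_bang m A"
  using assms unfolding satisfies_bang_def by auto

lemma satisfies_bang_shift:
  assumes "satisfies_bang n A"
  shows "satisfies_bang (n - k) (\<lambda>x y. A (x + k) (y + k))"
  unfolding satisfies_bang_def
proof (intro allI impI)
  fix a b c assume abc: "a < b \<and> b < c \<and> c \<le> n - k"
  then have "c + k \<le> n" by linarith
  with abc show "bang (int (A (b + k) (c + k))) (int (A (a + k) (c + k))) (int (A (a + k) (b + k)))"
    using satisfies_bangD[OF assms(1), of "a + k" "b + k" "c + k"] by simp
qed

lemma eq_fsum_restrict_shift_if_zero_across: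
  assumes "m < n" "\<And>a c. a \<le> m \<Longrightarrow> m < c \<Longrightarrow> c \<le> n \<Longrightarrow> A a c = 0"
    and "i < j" "j \<le> n"
  shows "A i j = fsum m A (n - Suc m) (\<lambda>x y. A (x + Suc m) (y + Suc m)) i j"
  using assms by (auto simp: fsum_def not_le)

lemma not_indecomposable_if_zero_across:
  assumes "satisfies_bang n A" "m < n"
    and "\<And>a c. a \<le> m \<Longrightarrow> m < c \<Longrightarrow> c \<le> n \<Longrightarrow> A a c = 0"
  shows "\<not> indecomposable n A"
proof -
  have "m + (n - Suc m) + 1 = n" using assms(2) by simp
  moreover have "satisfies_bang m A" using satisfies_bang_mono assms(1,2) by simp
  moreover have "satisfies_bang (n - Suc m) (\<lambda>x y. A (x + Suc m) (y + Suc m))"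
    using satisfies_bang_shift[OF assms(1), of "Suc m"] by simp
  moreover have "\<forall>i j. i < j \<and> j \<le> n \<longrightarrow>
      A i j = fsum m A (n - Suc m) (\<lambda>x y. A (x + Suc m) (y + Suc m)) i j"
    using eq_fsum_restrict_shift_if_zero_across[OF assms(2)] assms(3) by blast
  ultimately show ?thesis unfolding indecomposable_def by blast
qed

lemma satisfies_bang_zero_across_last_zero:
  assumes "satisfies_bang n A" "m < n" "A m n = 0"
    and last: "\<And>b. m < b \<Longrightarrow> b < n \<Longrightarrow> 0 < A b n"
    and "a \<le> m" "m < c" "c \<le> n"
  shows "A a c = 0"
proof -
  have column: "A a n = 0"
    using assms(3,5) satisfies_bang_zero_left[OF assms(1) _ assms(2) order_refl, of a]
    by (cases "a = m") auto
  show ?thesis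
  proof (cases "c = n")
    case False
    then show ?thesis
      using satisfies_bang_zero_inner[OF assms(1) _ _ order_refl column last] assms(5-7) by simp
  qed (use column in simp)
qed

theorem lemma5p7:
  fixes n :: nat and A :: "nat \<Rightarrow> nat \<Rightarrow> nat"
  assumes "satisfies_bang n A"
    and "indecomposable n A"
    and "i < n"
  shows "A i n > 0"
proof (rule ccontr)
  assume "\<not> A i n > 0"
  define Z where "Z = {a. a < n \<and> A a n = 0}"
  define m where "m = Max Z"
  have "finite Z" "i \<in> Z"
    unfolding Z_def using \<open>\<not> A i n > 0\<close> assms(3) by simp_all
  then have "m \<in> Z" and greatest: "\<And>b. b \<in> Z \<Longrightarrow> b \<le> m"
    unfolding m_def using Max_in by auto
  then have m: "m < n" "A m n = 0" unfolding Z_def by simp_all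
  have last: "0 < A b n" if "m < b" "b < n" for b
    using greatest[of b] that unfolding Z_def by fastforce
  have "\<not> indecomposable n A"
    using not_indecomposable_if_zero_across[OF assms(1) m(1)]
      satisfies_bang_zero_across_last_zero[OF assms(1) m last] by blast
  with assms(2) show False by contradiction
qed

end
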